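(* Let $(X,\Gamma)$ be a metric tame dynamical system and let $M(X)$ be the compact convex set of Borel probability measures on $X$ with the weak$^*$ topology, on which $\Gamma$ acts by push-forward: $(\gamma\nu)(f)=\nu(f\circ\gamma)$ for $f\in C(X)$. Then for each $p\in E(X,\Gamma)$, the formula $p_*\nu(f)=\nu(f\circ p)$ ($\nu\in M(X)$, $f\in C(X)$) defines an element $p_*\in E(M(X),\Gamma)$ (here $f\circ p$ is Borel, of Baire class 1), and the map $p\mapsto p_*$ is both an isomorphism of dynamical systems and a semigroup isomorphism of $E(X,\Gamma)$ onto $E(M(X),\Gamma)$.
   Context: A dynamical system $(X,\Gamma)$ consists of a compact Hausdorff space $X$ and a topological group $\Gamma$ acting continuously on $X$; it is metric if $X$ is metrizable. The enveloping semigroup $E(X,\Gamma)$ is the closure in $X^X$ (pointwise topology) of the maps $x\mapsto\gamma x$, $\gamma\in\Gamma$; $\Gamma$ acts on it by left composition. A space $K$ is Fréchet if every point in the closure of a set $A$ is the limit of a sequence from $A$. $(X,\Gamma)$ is tame if $E(X,\Gamma)$ is separable and Fréchet. *)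

theory Defs
  imports "HOL-Probability.Probability"
begin

text \<open>Continuous action of a topological group (type class topological_group_add,
  written additively but not assumed commutative) on a space.\<close>
definition continuous_action :: "('g::topological_group_add \<Rightarrow> 'a::topological_space \<Rightarrow> 'a) \<Rightarrow> bool" where
  "continuous_action act \<longleftrightarrow>
     (\<forall>x. act 0 x = x) \<and> (\<forall>g h x. act (g + h) x = act g (act h x)) \<and>
     continuous_on UNIV (\<lambda>(g, x). act g x)"

text \<open>Enveloping semigroup: closure of the maps act g in X^X with the pointwise
  (product) topology, which is the standard topology instance on function types.\<close>
definition enveloping_semigroup :: "('g \<Rightarrow> 'a \<Rightarrow> 'a::topological_space) \<Rightarrow> ('a \<Rightarrow> 'a) set" where
  "enveloping_semigroup act = closure (range act)"

definition separable_set :: "'b::topological_space set \<Rightarrow> bool" where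
  "separable_set K \<longleftrightarrow> (\<exists>D. countable D \<and> D \<subseteq> K \<and> K \<subseteq> closure D)"

definition frechet_set :: "'b::topological_space set \<Rightarrow> bool" where
  "frechet_set K \<longleftrightarrow> (\<forall>A x. A \<subseteq> K \<longrightarrow> x \<in> K \<longrightarrow> x \<in> closure A \<longrightarrow>
       (\<exists>s::nat \<Rightarrow> 'b. (\<forall>n. s n \<in> A) \<and> s \<longlonglongrightarrow> x))"

definition tame :: "('g \<Rightarrow> 'a \<Rightarrow> 'a::topological_space) \<Rightarrow> bool" where
  "tame act \<longleftrightarrow> separable_set (enveloping_semigroup act) \<and> frechet_set (enveloping_semigroup act)"

definition prob_measures :: "'a::topological_space measure set" where
  "prob_measures = {\<mu>. prob_space \<mu> \<and> sets \<mu> = sets (borel :: 'a measure)}"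

definition weak_star :: "'a::topological_space measure topology" where
  "weak_star = topology_generated_by
     {{\<mu> \<in> prob_measures. (\<integral>x. f x \<partial>\<mu>) \<in> U} | f U. continuous_on UNIV (f :: 'a \<Rightarrow> real) \<and> open U}"

definition push_action :: "('g \<Rightarrow> 'a \<Rightarrow> 'a::topological_space) \<Rightarrow> 'g \<Rightarrow> 'a measure \<Rightarrow> 'a measure" where
  "push_action act g = restrict (\<lambda>\<nu>. distr \<nu> borel (act g)) prob_measures"

definition measure_maps_top :: "('a::topological_space measure \<Rightarrow> 'a measure) topology" where
  "measure_maps_top = product_topology (\<lambda>_. weak_star) prob_measures"

definition enveloping_semigroup_M :: "('g \<Rightarrow> 'a \<Rightarrow> 'a::topological_space) \<Rightarrow> ('a measure \<Rightarrow> 'a measure) set" where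
  "enveloping_semigroup_M act = measure_maps_top closure_of (range (push_action act))"

definition pstar :: "('a \<Rightarrow> 'a::topological_space) \<Rightarrow> 'a measure \<Rightarrow> 'a measure" where
  "pstar p = restrict (\<lambda>\<nu>. distr \<nu> borel p) prob_measures"

end

theory Submission
  imports Defs
begin

(* Since E(X) is Frechet, every p in E(X) is the pointwise limit of a sequence of continuous
   maps act g_n, so p is Borel and p_* nu = distr nu p is a probability measure. By dominated
   convergence p |-> integral (f o p) d nu is sequentially continuous on E(X), hence continuous,
   again by the Frechet property; thus p |-> p_* is continuous into M(X)^M(X). It is injective
   (test on Dirac measures), E(X) is compact, and M(X)^M(X) is Hausdorff because a finite Borel
   measure on a metric space is determined by the integrals of bounded continuous functions.
   So p |-> p_* is a homeomorphism onto its image, the closure of the maps gamma_* = (act gamma)_*,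
   i.e. onto E(M(X)). Compatibility with composition is the chain rule for push-forwards. *)

lemma tendsto_fun_apply:
  fixes s :: "nat \<Rightarrow> 'a \<Rightarrow> 'b::topological_space"
  assumes "s \<longlonglongrightarrow> p"
  shows "(\<lambda>n. s n x) \<longlonglongrightarrow> p x"
  using continuous_on_tendsto_compose[OF continuous_on_product_coordinates assms] by simp

lemma compact_UNIV_fun:
  assumes "compact (UNIV :: 'b::topological_space set)"
  shows "compact (UNIV :: ('a \<Rightarrow> 'b) set)"
  using assms compact_space_product_topology[of "\<lambda>_::'a. euclidean :: 'b topology" UNIV]
  by (simp add: compact_space_def euclidean_product_topology)

lemma frechet_setD:
  assumes "frechet_set K" "A \<subseteq> K" "x \<in> K" "x \<in> closure A"
  obtains s where "\<And>n. s n \<in> A" "s \<longlonglongrightarrow> x"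
proof -
  have "\<exists>s. (\<forall>n. s n \<in> A) \<and> s \<longlonglongrightarrow> x"
    using assms unfolding frechet_set_def by blast
  then show ?thesis
    using that by blast
qed

lemma continuous_on_frechet_set_sequentially:
  fixes h :: "'b::topological_space \<Rightarrow> 'c::topological_space"
  assumes frechet: "frechet_set E"
    and seq: "\<And>s q. (\<And>n. s n \<in> E) \<Longrightarrow> q \<in> E \<Longrightarrow> s \<longlonglongrightarrow> q \<Longrightarrow> (\<lambda>n. h (s n)) \<longlonglongrightarrow> h q"
  shows "continuous_on E h"
  unfolding continuous_on_closed_invariant
proof (intro allI impI)
  fix B :: "'c set" assume "closed B"
  let ?A = "h -` B \<inter> E"
  have "closure ?A \<inter> E \<subseteq> ?A"
  proof
    fix q assume q: "q \<in> closure ?A \<inter> E"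
    obtain s where s: "\<And>n. s n \<in> ?A" "s \<longlonglongrightarrow> q"
      using frechet_setD[OF frechet Int_lower2 IntD2[OF q] IntD1[OF q]] by blast
    have "h (s n) \<in> B" for n
      using s(1)[of n] by simp
    moreover have "(\<lambda>n. h (s n)) \<longlonglongrightarrow> h q"
      by (rule seq) (use s q in auto)
    ultimately have "h q \<in> B"
      by (rule closed_sequentially[OF \<open>closed B\<close>])
    then show "q \<in> ?A"
      using q by simp
  qed
  then have "closure ?A \<inter> E = ?A"
    using closure_subset[of ?A] by blast
  then show "\<exists>A. closed A \<and> A \<inter> E = ?A"
    using closed_closure by blast
qed

lemma borel_measurable_closure_frechet_set:
  fixes A :: "('a::topological_space \<Rightarrow> 'b::metric_space) set"
  assumes frechet: "frechet_set (closure A)" and meas: "A \<subseteq> borel_measurable borel"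
    and p: "p \<in> closure A"
  shows "p \<in> borel_measurable borel"
proof -
  obtain s where s: "\<And>n. s n \<in> A" "s \<longlonglongrightarrow> p"
    using frechet_setD[OF frechet closure_subset p p] by blast
  show ?thesis
  proof (rule borel_measurable_LIMSEQ_metric)
    show "s n \<in> borel_measurable borel" for n
      using s(1) meas by blast
    show "(\<lambda>n. s n x) \<longlonglongrightarrow> p x" for x
      using s(2) by (rule tendsto_fun_apply)
  qed
qed

lemma tendsto_integral_comp_bounded_continuous:
  fixes s :: "nat \<Rightarrow> 'a::topological_space \<Rightarrow> 'b::topological_space" and f :: "'b \<Rightarrow> real"
  assumes \<nu>: "finite_measure \<nu>" "sets \<nu> = sets borel"
    and f: "continuous_on UNIV f" "bounded (range f)"
    and meas: "\<And>n. s n \<in> borel_measurable borel" "p \<in> borel_measurable borel"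
    and lim: "\<And>x. (\<lambda>n. s n x) \<longlonglongrightarrow> p x"
  shows "(\<lambda>n. \<integral>x. f (s n x) \<partial>\<nu>) \<longlonglongrightarrow> (\<integral>x. f (p x) \<partial>\<nu>)"
proof -
  obtain B where B: "\<And>x. norm (f x) \<le> B"
    using f(2) by (auto simp: bounded_iff)
  have f_comp_meas: "(\<lambda>x. f (q x)) \<in> borel_measurable \<nu>" if "q \<in> borel_measurable borel" for q
    using measurable_compose[OF that borel_measurable_continuous_onI[OF f(1)]]
    by (simp add: measurable_cong_sets[OF \<nu>(2) refl])
  show ?thesis
  proof (rule integral_dominated_convergence[where w="\<lambda>_. B"])
    show "AE x in \<nu>. (\<lambda>n. f (s n x)) \<longlonglongrightarrow> f (p x)"
      using continuous_on_tendsto_compose[OF f(1) lim] by simp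
  qed (use \<nu>(1) B meas f_comp_meas in \<open>auto simp: finite_measure.integrable_const\<close>)
qed

lemma tendsto_cutoff_infdist_indicator:
  fixes x :: "'a::metric_space"
  assumes "closed F" "F \<noteq> {}"
  shows "(\<lambda>n. max 0 (1 - real n * infdist x F)) \<longlonglongrightarrow> indicator F x"
proof (cases "x \<in> F")
  case True
  then show ?thesis by simp
next
  case False
  then have d: "infdist x F > 0"
    using assms in_closed_iff_infdist_zero infdist_nonneg order_less_le by metis
  obtain n0 :: nat where n0: "real n0 * infdist x F > 1"
    using reals_Archimedean3[OF d] by blast
  have "max 0 (1 - real n * infdist x F) = 0" if "n \<ge> n0" for n
  proof -
    have "real n0 * infdist x F \<le> real n * infdist x F"
      using that d by (intro mult_right_mono) auto
    then show ?thesis using n0 by simp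
  qed
  then have "eventually (\<lambda>n. max 0 (1 - real n * infdist x F) = 0) sequentially"
    by (auto simp: eventually_sequentially)
  then show ?thesis
    using False by (simp add: tendsto_eventually)
qed

lemma tendsto_integral_cutoff_infdist:
  fixes K :: "'a::metric_space measure"
  assumes K: "finite_measure K" "sets K = sets borel" and F: "closed F" "F \<noteq> {}"
  shows "(\<lambda>n. \<integral>x. max 0 (1 - real n * infdist x F) \<partial>K) \<longlonglongrightarrow> measure K F"
proof -
  have "F \<in> sets K"
    using K(2) F(1) by simp
  have "(\<lambda>n. \<integral>x. max 0 (1 - real n * infdist x F) \<partial>K) \<longlonglongrightarrow> (\<integral>x. indicator F x \<partial>K)"
  proof (rule integral_dominated_convergence[where w="\<lambda>_. 1"])
    show "(\<lambda>x. max 0 (1 - real n * infdist x F)) \<in> borel_measurable K" for n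
      unfolding measurable_cong_sets[OF K(2) refl]
      by (intro borel_measurable_continuous_onI continuous_intros)
    show "AE x in K. (\<lambda>n. max 0 (1 - real n * infdist x F)) \<longlonglongrightarrow> indicator F x"
      using tendsto_cutoff_infdist_indicator[OF F] by simp
  qed (use K(1) \<open>F \<in> sets K\<close> in \<open>auto simp: finite_measure.integrable_const infdist_nonneg\<close>)
  then show ?thesis
    using \<open>F \<in> sets K\<close> by simp
qed

lemma measure_eqI_integral_bounded_continuous:
  fixes M N :: "'a::metric_space measure"
  assumes M: "finite_measure M" "sets M = sets borel" and N: "finite_measure N" "sets N = sets borel"
    and integral_eq: "\<And>f :: 'a \<Rightarrow> real. continuous_on UNIV f \<Longrightarrow> bounded (range f) \<Longrightarrow>
      (\<integral>x. f x \<partial>M) = (\<integral>x. f x \<partial>N)"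
  shows "M = N"
proof (rule measure_eqI_generator_eq[where E="Collect closed" and \<Omega>=UNIV and A="\<lambda>_. UNIV"])
  have "sets (borel :: 'a measure) = sigma_sets UNIV (Collect closed)"
    by (simp add: borel_eq_closed)
  then show "sets M = sigma_sets UNIV (Collect closed)" "sets N = sigma_sets UNIV (Collect closed)"
    using M(2) N(2) by simp_all
  show "emeasure M F = emeasure N F" if "F \<in> Collect closed" for F
  proof (cases "F = {}")
    case False
    have "bounded (range (\<lambda>x. max 0 (1 - real n * infdist x F)))" for n
      by (rule boundedI[of _ 1]) (auto simp: infdist_nonneg)
    then have "(\<lambda>n. \<integral>x. max 0 (1 - real n * infdist x F) \<partial>M) = (\<lambda>n. \<integral>x. max 0 (1 - real n * infdist x F) \<partial>N)"
      by (intro ext integral_eq continuous_intros)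
    then have "measure M F = measure N F"
      using tendsto_integral_cutoff_infdist[OF M _ False] tendsto_integral_cutoff_infdist[OF N _ False] that
      by (metis LIMSEQ_unique mem_Collect_eq)
    then show ?thesis
      using M(1) N(1) by (simp add: finite_measure.emeasure_eq_measure)
  qed simp
  show "Int_stable (Collect closed)"
    by (simp add: Int_stable_def closed_Int)
  show "emeasure M (UNIV :: 'a set) \<noteq> \<infinity>"
    using M(1) by (simp add: finite_measure.emeasure_finite)
qed auto

lemma topspace_weak_star: "topspace (weak_star :: 'a::topological_space measure topology) = prob_measures"
proof -
  let ?S = "{{\<mu> \<in> prob_measures. (\<integral>x. f x \<partial>\<mu>) \<in> U} | f U. continuous_on UNIV (f :: 'a \<Rightarrow> real) \<and> open U}"
  have "prob_measures = {\<mu> \<in> prob_measures. (\<integral>x. (\<lambda>_. 0 :: real) x \<partial>\<mu>) \<in> UNIV}"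
    by simp
  then have "prob_measures \<in> ?S"
    by (intro CollectI exI[of _ "\<lambda>_. 0 :: real"] exI[of _ UNIV]) simp
  then have "\<Union>?S = prob_measures"
    by blast
  then show ?thesis
    by (simp add: weak_star_def)
qed

lemma openin_weak_star_integral_preimage:
  fixes f :: "'a::topological_space \<Rightarrow> real"
  assumes "continuous_on UNIV f" "open U"
  shows "openin weak_star {\<mu> \<in> prob_measures. (\<integral>x. f x \<partial>\<mu>) \<in> U}"
  unfolding weak_star_def
  by (rule topology_generated_by_Basis) (intro CollectI exI[of _ f] exI[of _ U] conjI refl assms)

lemma continuous_map_weak_star:
  fixes g :: "'b \<Rightarrow> 'a::topological_space measure"
  assumes "g \<in> topspace X \<rightarrow> prob_measures"
    and "\<And>f :: 'a \<Rightarrow> real. continuous_on UNIV f \<Longrightarrow>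
      continuous_map X euclideanreal (\<lambda>x. \<integral>y. f y \<partial>g x)"
  shows "continuous_map X weak_star g"
  unfolding weak_star_def continuous_on_generated_topo_iff
proof (intro conjI allI impI)
  fix W assume "W \<in> {{\<mu> \<in> prob_measures. (\<integral>x. f x \<partial>\<mu>) \<in> U} | f U. continuous_on UNIV (f :: 'a \<Rightarrow> real) \<and> open U}"
  then obtain f :: "'a \<Rightarrow> real" and U where f: "continuous_on UNIV f" "open U"
    and W: "W = {\<mu> \<in> prob_measures. (\<integral>x. f x \<partial>\<mu>) \<in> U}"
    by blast
  have "g -` W \<inter> topspace X = {x \<in> topspace X. (\<integral>y. f y \<partial>g x) \<in> U}"
    using assms(1) by (auto simp: W)
  then show "openin X (g -` W \<inter> topspace X)"
    using openin_continuous_map_preimage[OF assms(2)[OF f(1)]] f(2) by simp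
next
  show "g ` topspace X \<subseteq>
    \<Union>{{\<mu> \<in> prob_measures. (\<integral>x. f x \<partial>\<mu>) \<in> U} | f U. continuous_on UNIV (f :: 'a \<Rightarrow> real) \<and> open U}"
    using assms(1) topspace_weak_star unfolding weak_star_def by auto
qed

lemma prob_measuresD:
  assumes "\<mu> \<in> prob_measures"
  shows "finite_measure \<mu>" "sets \<mu> = sets borel"
  using assms by (auto simp: prob_measures_def prob_space.finite_measure)

lemma Hausdorff_space_weak_star: "Hausdorff_space (weak_star :: 'a::metric_space measure topology)"
  unfolding Hausdorff_space_def topspace_weak_star
proof (intro allI impI, elim conjE)
  fix \<mu> \<nu> :: "'a measure"
  assume \<mu>: "\<mu> \<in> prob_measures" and \<nu>: "\<nu> \<in> prob_measures" and "\<mu> \<noteq> \<nu>"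
  then obtain f :: "'a \<Rightarrow> real" where f: "continuous_on UNIV f"
    and "(\<integral>x. f x \<partial>\<mu>) \<noteq> (\<integral>x. f x \<partial>\<nu>)"
    using measure_eqI_integral_bounded_continuous[OF prob_measuresD[OF \<mu>] prob_measuresD[OF \<nu>]] by blast
  then obtain U V where UV: "open U" "open V" "(\<integral>x. f x \<partial>\<mu>) \<in> U" "(\<integral>x. f x \<partial>\<nu>) \<in> V" "U \<inter> V = {}"
    by (metis hausdorff)
  let ?U = "{\<rho> \<in> prob_measures. (\<integral>x. f x \<partial>\<rho>) \<in> U}" and ?V = "{\<rho> \<in> prob_measures. (\<integral>x. f x \<partial>\<rho>) \<in> V}"
  have "openin weak_star ?U" "openin weak_star ?V"
    using openin_weak_star_integral_preimage[OF f] UV(1,2) by simp_all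
  moreover have "\<mu> \<in> ?U" "\<nu> \<in> ?V"
    using \<mu> \<nu> UV(3,4) by simp_all
  moreover have "disjnt ?U ?V"
    using UV(5) by (auto simp: disjnt_def)
  ultimately show "\<exists>U V. openin weak_star U \<and> openin weak_star V \<and> \<mu> \<in> U \<and> \<nu> \<in> V \<and> disjnt U V"
    by blast
qed

lemma Hausdorff_space_measure_maps_top:
  "Hausdorff_space (measure_maps_top :: ('a::metric_space measure \<Rightarrow> 'a measure) topology)"
  unfolding measure_maps_top_def Hausdorff_space_product_topology
  using Hausdorff_space_weak_star by blast

lemma measurable_prob_measures_borel:
  assumes "\<nu> \<in> prob_measures" "p \<in> borel_measurable borel"
  shows "p \<in> measurable \<nu> borel"
  unfolding measurable_cong_sets[OF prob_measuresD(2)[OF assms(1)] refl] by (rule assms(2))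

lemma pstar_in_prob_measures:
  assumes "p \<in> borel_measurable borel" "\<nu> \<in> prob_measures"
  shows "pstar p \<nu> \<in> prob_measures"
  using prob_space.prob_space_distr[OF _ measurable_prob_measures_borel[OF assms(2,1)]] assms(2)
  by (simp add: pstar_def prob_measures_def)

lemma integral_pstar:
  fixes f :: "'a::topological_space \<Rightarrow> real"
  assumes "p \<in> borel_measurable borel" "\<nu> \<in> prob_measures" "f \<in> borel_measurable borel"
  shows "(\<integral>x. f x \<partial>pstar p \<nu>) = (\<integral>x. f (p x) \<partial>\<nu>)"
  using integral_distr[OF measurable_prob_measures_borel[OF assms(2,1)] assms(3)] assms(2)
  by (simp add: pstar_def)

lemma pstar_comp:
  assumes "p \<in> borel_measurable borel" "q \<in> borel_measurable borel"
  shows "pstar (p \<circ> q) = restrict (pstar p \<circ> pstar q) prob_measures"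
proof
  fix \<nu> :: "'a measure"
  show "pstar (p \<circ> q) \<nu> = restrict (pstar p \<circ> pstar q) prob_measures \<nu>"
  proof (cases "\<nu> \<in> prob_measures")
    case True
    then show ?thesis
      using distr_distr[OF assms(1) measurable_prob_measures_borel[OF True assms(2)]]
        pstar_in_prob_measures[OF assms(2) True]
      by (simp add: pstar_def)
  qed (simp add: pstar_def)
qed

lemma push_action_eq_pstar: "push_action act g = pstar (act g)"
  by (simp add: push_action_def pstar_def)

lemma pstar_return:
  assumes "p \<in> borel_measurable borel"
  shows "pstar p (return borel x) = return borel (p x)"
  using distr_return[OF assms] by (simp add: pstar_def prob_measures_def prob_space_return)

lemma inj_on_pstar: "inj_on pstar (borel_measurable (borel :: 'a::t1_space measure))"
proof
  fix p q :: "'a \<Rightarrow> 'a"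
  assume p: "p \<in> borel_measurable borel" and q: "q \<in> borel_measurable borel" and "pstar p = pstar q"
  show "p = q"
  proof
    fix x
    have "return borel (p x) = return borel (q x)"
      using \<open>pstar p = pstar q\<close> pstar_return[OF p] pstar_return[OF q] by metis
    then have "emeasure (return borel (p x)) {q x} = emeasure (return borel (q x)) {q x}"
      by simp
    then show "p x = q x"
      by (simp add: emeasure_return indicator_def split: if_splits)
  qed
qed

lemma continuous_map_pstar:
  fixes E :: "('a::topological_space \<Rightarrow> 'a) set"
  assumes meas: "E \<subseteq> borel_measurable borel"
    and cont: "\<And>\<nu> f. \<nu> \<in> prob_measures \<Longrightarrow> continuous_on UNIV (f :: 'a \<Rightarrow> real) \<Longrightarrow>
      continuous_on E (\<lambda>p. \<integral>x. f (p x) \<partial>\<nu>)"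
  shows "continuous_map (top_of_set E) measure_maps_top pstar"
  unfolding measure_maps_top_def continuous_map_componentwise
proof (intro conjI ballI)
  show "pstar ` topspace (top_of_set E) \<subseteq> extensional prob_measures"
    by (auto simp: pstar_def)
  fix \<nu> :: "'a measure" assume \<nu>: "\<nu> \<in> prob_measures"
  show "continuous_map (top_of_set E) weak_star (\<lambda>p. pstar p \<nu>)"
  proof (rule continuous_map_weak_star)
    show "(\<lambda>p. pstar p \<nu>) \<in> topspace (top_of_set E) \<rightarrow> prob_measures"
      using meas \<nu> pstar_in_prob_measures by auto
    fix f :: "'a \<Rightarrow> real" assume f: "continuous_on UNIV f"
    have "continuous_on E (\<lambda>p. \<integral>y. f y \<partial>pstar p \<nu>) \<longleftrightarrow> continuous_on E (\<lambda>p. \<integral>x. f (p x) \<partial>\<nu>)"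
      using meas \<nu> borel_measurable_continuous_onI[OF f] by (intro continuous_on_cong) (auto simp: integral_pstar)
    then show "continuous_map (top_of_set E) euclideanreal (\<lambda>p. \<integral>y. f y \<partial>pstar p \<nu>)"
      using cont[OF \<nu> f] by simp
  qed
qed

lemma image_closure_of_compact_space:
  assumes "continuous_map X Y f" "compact_space X" "Hausdorff_space Y" "S \<subseteq> topspace X"
  shows "f ` (X closure_of S) = Y closure_of (f ` S)"
  using continuous_map_image_closure_subset[OF assms(1)]
    continuous_imp_closed_map[OF assms(1-3)] assms(4)
  by (auto simp: closed_map_closure_of_image)

lemma continuous_on_continuous_action:
  assumes "continuous_action act"
  shows "continuous_on UNIV (act g)"
proof -
  have "continuous_on UNIV (\<lambda>(g, x). act g x)"
    using assms by (simp add: continuous_action_def)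
  then have "continuous_on UNIV (\<lambda>x. (\<lambda>(g, x). act g x) (g, x))"
    by (rule continuous_on_compose2) (auto intro: continuous_intros)
  then show ?thesis
    by simp
qed

lemma compact_enveloping_semigroup:
  assumes "compact (UNIV :: 'a::topological_space set)"
  shows "compact (enveloping_semigroup (act :: 'g \<Rightarrow> 'a \<Rightarrow> 'a))"
  using compact_Int_closed[OF compact_UNIV_fun[OF assms], of "closure (range act)"]
  by (simp add: enveloping_semigroup_def)

lemma borel_measurable_enveloping_semigroup:
  fixes act :: "'g::topological_group_add \<Rightarrow> 'a::metric_space \<Rightarrow> 'a"
  assumes "continuous_action act" "frechet_set (enveloping_semigroup act)"
  shows "enveloping_semigroup act \<subseteq> borel_measurable borel"
  using assms borel_measurable_closure_frechet_set[of "range act"]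
    borel_measurable_continuous_onI[OF continuous_on_continuous_action]
  by (auto simp: enveloping_semigroup_def)

context
  fixes act :: "'g::topological_group_add \<Rightarrow> 'a::metric_space \<Rightarrow> 'a"
  assumes compact_UNIV: "compact (UNIV :: 'a set)"
    and continuous_action: "continuous_action act"
    and frechet: "frechet_set (enveloping_semigroup act)"
begin

lemma continuous_on_enveloping_semigroup_integral:
  fixes f :: "'a \<Rightarrow> real"
  assumes \<nu>: "\<nu> \<in> prob_measures" and f: "continuous_on UNIV f"
  shows "continuous_on (enveloping_semigroup act) (\<lambda>p. \<integral>x. f (p x) \<partial>\<nu>)"
proof (rule continuous_on_frechet_set_sequentially[OF frechet])
  fix s q
  assume s: "\<And>n. s n \<in> enveloping_semigroup act" and q: "q \<in> enveloping_semigroup act"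
    and lim: "s \<longlonglongrightarrow> q"
  have meas: "enveloping_semigroup act \<subseteq> borel_measurable borel"
    by (rule borel_measurable_enveloping_semigroup[OF continuous_action frechet])
  have "bounded (range f)"
    using compact_imp_bounded[OF compact_continuous_image[OF f compact_UNIV]] .
  then show "(\<lambda>n. \<integral>x. f (s n x) \<partial>\<nu>) \<longlonglongrightarrow> (\<integral>x. f (q x) \<partial>\<nu>)"
  proof (rule tendsto_integral_comp_bounded_continuous[OF prob_measuresD[OF \<nu>] f])
    show "s n \<in> borel_measurable borel" for n
      using s meas by blast
    show "q \<in> borel_measurable borel"
      using q meas by blast
    show "(\<lambda>n. s n x) \<longlonglongrightarrow> q x" for x
      using lim by (rule tendsto_fun_apply)
  qed
qed

lemma continuous_map_pstar_enveloping_semigroup: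
  "continuous_map (top_of_set (enveloping_semigroup act)) measure_maps_top pstar"
  using borel_measurable_enveloping_semigroup[OF continuous_action frechet]
    continuous_on_enveloping_semigroup_integral
  by (rule continuous_map_pstar)

lemma compact_space_enveloping_semigroup: "compact_space (top_of_set (enveloping_semigroup act))"
  using compact_enveloping_semigroup[OF compact_UNIV, of act] by (simp add: compact_space_subtopology)

lemma image_pstar_enveloping_semigroup:
  "pstar ` enveloping_semigroup act = enveloping_semigroup_M act"
proof -
  have "top_of_set (enveloping_semigroup act) closure_of range act = enveloping_semigroup act"
    by (simp add: closure_of_subtopology_open closure_subset enveloping_semigroup_def)
  then show ?thesis
    using image_closure_of_compact_space[OF continuous_map_pstar_enveloping_semigroup
        compact_space_enveloping_semigroup Hausdorff_space_measure_maps_top, of "range act"]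
    by (simp add: enveloping_semigroup_def enveloping_semigroup_M_def push_action_eq_pstar image_image
        closure_subset)
qed

lemma homeomorphic_map_pstar_enveloping_semigroup:
  "homeomorphic_map (top_of_set (enveloping_semigroup act))
     (subtopology measure_maps_top (enveloping_semigroup_M act)) pstar"
proof (rule continuous_imp_homeomorphic_map)
  show "continuous_map (top_of_set (enveloping_semigroup act))
      (subtopology measure_maps_top (enveloping_semigroup_M act)) pstar"
    using image_pstar_enveloping_semigroup
    by (intro continuous_map_into_subtopology[OF continuous_map_pstar_enveloping_semigroup]) auto
  show "Hausdorff_space (subtopology measure_maps_top (enveloping_semigroup_M act))"
    by (rule Hausdorff_space_subtopology[OF Hausdorff_space_measure_maps_top])
  show "pstar ` topspace (top_of_set (enveloping_semigroup act)) =
      topspace (subtopology measure_maps_top (enveloping_semigroup_M act))"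
    using image_pstar_enveloping_semigroup
    by (simp add: enveloping_semigroup_M_def closure_of_subset_topspace Int_absorb1)
  show "inj_on pstar (topspace (top_of_set (enveloping_semigroup act)))"
    using inj_on_subset[OF inj_on_pstar borel_measurable_enveloping_semigroup[OF continuous_action frechet]]
    by simp
qed (rule compact_space_enveloping_semigroup)

end

theorem mainTheorem2:
  fixes act :: "'g::topological_group_add \<Rightarrow> 'a::metric_space \<Rightarrow> 'a"
  assumes "compact (UNIV :: 'a set)"
    and "continuous_action act"
    and "tame act"
  shows "(\<forall>p \<in> enveloping_semigroup act. p \<in> borel_measurable borel)
     \<and> (\<forall>p \<in> enveloping_semigroup act. \<forall>\<nu> \<in> prob_measures. \<forall>f :: 'a \<Rightarrow> real.
           continuous_on UNIV f \<longrightarrow> (\<integral>x. f x \<partial>(pstar p \<nu>)) = (\<integral>x. f (p x) \<partial>\<nu>))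
     \<and> (\<forall>p \<in> enveloping_semigroup act. pstar p \<in> enveloping_semigroup_M act)
     \<and> bij_betw pstar (enveloping_semigroup act) (enveloping_semigroup_M act)
     \<and> homeomorphic_map (top_of_set (enveloping_semigroup act))
         (subtopology measure_maps_top (enveloping_semigroup_M act)) pstar
     \<and> (\<forall>p \<in> enveloping_semigroup act. \<forall>g.
           pstar (act g \<circ> p) = restrict (push_action act g \<circ> pstar p) prob_measures)
     \<and> (\<forall>p \<in> enveloping_semigroup act. \<forall>q \<in> enveloping_semigroup act.
           pstar (p \<circ> q) = restrict (pstar p \<circ> pstar q) prob_measures)"
proof -
  let ?E = "enveloping_semigroup act"
  have frechet: "frechet_set ?E"
    using assms(3) by (simp add: tame_def)
  have meas: "?E \<subseteq> borel_measurable borel"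
    by (rule borel_measurable_enveloping_semigroup[OF assms(2) frechet])
  have act_meas: "act g \<in> borel_measurable borel" for g
    by (rule borel_measurable_continuous_onI[OF continuous_on_continuous_action[OF assms(2)]])
  note image = image_pstar_enveloping_semigroup[OF assms(1,2) frechet]
  note homeo = homeomorphic_map_pstar_enveloping_semigroup[OF assms(1,2) frechet]
  have inj: "inj_on pstar ?E"
    using homeomorphic_imp_injective_map[OF homeo] by simp
  have "\<forall>p \<in> ?E. \<forall>\<nu> \<in> prob_measures. \<forall>f :: 'a \<Rightarrow> real.
      continuous_on UNIV f \<longrightarrow> (\<integral>x. f x \<partial>(pstar p \<nu>)) = (\<integral>x. f (p x) \<partial>\<nu>)"
    using meas by (blast intro: integral_pstar borel_measurable_continuous_onI)
  moreover have "\<forall>p \<in> ?E. \<forall>g. pstar (act g \<circ> p) = restrict (push_action act g \<circ> pstar p) prob_measures"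
    using meas act_meas by (auto simp: pstar_comp push_action_eq_pstar)
  moreover have "\<forall>p \<in> ?E. \<forall>q \<in> ?E. pstar (p \<circ> q) = restrict (pstar p \<circ> pstar q) prob_measures"
    using meas by (blast intro: pstar_comp)
  ultimately show ?thesis
    using meas image homeo inj unfolding bij_betw_def by blast
qed

end
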